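(* For every $n\ge1$, the matrix $\left(h_{1-i-j}(X_1,\dots,X_n)\right)_{1\le i,j\le n}$ is invertible and $$\left[\left(h_{1-i-j}(X_1,\dots,X_n)\right)_{1\le i,j\le n}\right]^{-1}=\left((-1)^{i+j}e_{i+j-1}(X_1,\dots,X_n)\right)_{1\le i,j\le n},$$ where $e_m$ is the $m$-th elementary symmetric polynomial ($e_m=0$ for $m>n$).
   Context: Extended complete homogeneous symmetric functions: for $k\ge0$, $h_k(X_1,\dots,X_n)=\sum_{l_1+\dots+l_n=k,\ l_i\ge0}X_1^{l_1}\cdots X_n^{l_n}$; for $k<0$, $h_k(X_1,\dots,X_n)=(-1)^{n+1}\sum_{l_1+\dots+l_n=k,\ l_i<0}X_1^{l_1}\cdots X_n^{l_n}$. *)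

theory Defs
  imports Complex_Main
begin

definition hexps :: "nat \<Rightarrow> int \<Rightarrow> (nat \<Rightarrow> int) set" where
  "hexps n k =
     (if k \<ge> 0 then {l. (\<forall>i\<in>{1..n}. 0 \<le> l i) \<and> (\<forall>i. i \<notin> {1..n} \<longrightarrow> l i = 0)
                        \<and> (\<Sum>i=1..n. l i) = k}
      else {l. (\<forall>i\<in>{1..n}. l i < 0) \<and> (\<forall>i. i \<notin> {1..n} \<longrightarrow> l i = 0)
                        \<and> (\<Sum>i=1..n. l i) = k})"

definition hsym :: "nat \<Rightarrow> (nat \<Rightarrow> 'a::field) \<Rightarrow> int \<Rightarrow> 'a" where
  "hsym n X k =
     (if k \<ge> 0 then 1 else (-1) ^ (n + 1)) *
     (\<Sum>l\<in>hexps n k. \<Prod>i=1..n. X i powi l i)"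

definition esym :: "nat \<Rightarrow> (nat \<Rightarrow> 'a::comm_ring_1) \<Rightarrow> nat \<Rightarrow> 'a" where
  "esym n X m = (\<Sum>S\<in>{S. S \<subseteq> {1..n} \<and> card S = m}. \<Prod>i\<in>S. X i)"

end

theory Submission
  imports Defs "HOL-Computational_Algebra.Formal_Power_Series"
begin

text \<open>
  Let E(t) = \<Prod>i. (t - X_i) = \<Sum>a. (-1)^(n-a) e_(n-a) t^a and
  G(t) = \<Prod>i. t/(X_i - t) = \<Prod>i. \<Sum>j>0. X_i^(-j) t^j. The coefficient of t^m in G is
  the sum of all monomials with negative exponents of total degree -m, i.e. (-1)^(n+1) h_(-m)
  for m \<ge> 1, while E G = (-t)^n. Comparing the coefficients of t^(n+d) gives
  \<Sum>s. (-1)^s e_s h_(-d-s) = -[d = 0], and the (i,j) entry of the product of the two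
  matrices is exactly such a sum with d = i - j; for i < j every term vanishes because
  h_(-m) = 0 for 0 < m < n and e_s = 0 for s > n. Both matrices are symmetric, so the
  product in the other order is the identity as well.
\<close>


lemma esym_0: "esym n X 0 = 1"
proof -
  have "{S. S \<subseteq> {1..n} \<and> card S = 0} = {{}}"
    by (auto dest: finite_subset)
  then show ?thesis
    by (simp add: esym_def)
qed

lemma esym_eq_0: "n < m \<Longrightarrow> esym n X m = 0"
proof -
  assume "n < m"
  have "card S \<le> n" if "S \<subseteq> {1..n}" for S
    using card_mono[OF finite_atLeastAtMost that] by simp
  then have no_subsets: "{S. S \<subseteq> {1..n} \<and> card S = m} = {}"
    using \<open>n < m\<close> leD by blast
  show ?thesis
    unfolding esym_def no_subsets by simp
qed

lemma esym_Suc_Suc: "esym (Suc n) X (Suc m) = esym n X (Suc m) + X (Suc n) * esym n X m"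
proof -
  let ?P = "\<lambda>m. {S. S \<subseteq> {1..n} \<and> card S = m}"
  have finite_P: "finite (?P m)" for m
    by (rule finite_subset[of _ "Pow {1..n}"]) auto
  have split: "{S. S \<subseteq> {1..Suc n} \<and> card S = Suc m} = ?P (Suc m) \<union> insert (Suc n) ` ?P m"
  proof (intro set_eqI iffI)
    fix S assume S: "S \<in> {S. S \<subseteq> {1..Suc n} \<and> card S = Suc m}"
    then have "finite S"
      using finite_subset by auto
    show "S \<in> ?P (Suc m) \<union> insert (Suc n) ` ?P m"
    proof (cases "Suc n \<in> S")
      case True
      then have "S = insert (Suc n) (S - {Suc n})" "S - {Suc n} \<in> ?P m"
        using S \<open>finite S\<close> by auto
      then show ?thesis
        by blast
    next
      case False
      then have "S \<subseteq> {1..n}"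
        using S by (auto simp: subset_eq le_Suc_eq)
      then show ?thesis
        using S by simp
    qed
  next
    fix S assume "S \<in> ?P (Suc m) \<union> insert (Suc n) ` ?P m"
    then show "S \<in> {S. S \<subseteq> {1..Suc n} \<and> card S = Suc m}"
    proof
      assume "S \<in> insert (Suc n) ` ?P m"
      then obtain T where T: "T \<subseteq> {1..n}" "card T = m" and S: "S = insert (Suc n) T"
        by blast
      have "finite T" "Suc n \<notin> T"
        using T finite_subset[of T "{1..n}"] by auto
      then have "card S = Suc m"
        using S T by simp
      moreover have "S \<subseteq> {1..Suc n}"
        using S T by auto
      ultimately show ?thesis
        by simp
    qed auto
  qed
  have new: "Suc n \<notin> S" "finite S" if "S \<in> ?P m" for S
    using that finite_subset[of S "{1..n}"] by auto
  then have "inj_on (insert (Suc n)) (?P m)"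
    by (meson inj_onI insert_ident)
  moreover have "prod X (insert (Suc n) S) = X (Suc n) * prod X S" if "S \<in> ?P m" for S
    using new[OF that] by simp
  ultimately have "(\<Sum>S\<in>insert (Suc n) ` ?P m. prod X S) = X (Suc n) * esym n X m"
    by (simp add: esym_def sum.reindex sum_distrib_left)
  moreover have "?P (Suc m) \<inter> insert (Suc n) ` ?P m = {}"
    by auto
  ultimately show ?thesis
    unfolding esym_def split by (simp add: sum.union_disjoint finite_P)
qed

definition neg_exps :: "nat \<Rightarrow> nat \<Rightarrow> (nat \<Rightarrow> int) set" where
  "neg_exps n m = {l. (\<forall>i\<in>{1..n}. l i < 0) \<and> (\<forall>i. i \<notin> {1..n} \<longrightarrow> l i = 0)
                      \<and> (\<Sum>i=1..n. l i) = - int m}"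

text \<open>For m > 0 this is (-1)^(n+1) h_(-m), see hsym_neg; for m = 0 it is [n = 0], not h_0 = 1.\<close>

definition hneg :: "nat \<Rightarrow> (nat \<Rightarrow> 'a::field) \<Rightarrow> nat \<Rightarrow> 'a" where
  "hneg n X m = (\<Sum>l\<in>neg_exps n m. \<Prod>i=1..n. X i powi l i)"

lemma hsym_neg: "k < 0 \<Longrightarrow> hsym n X k = (-1) ^ (n + 1) * hneg n X (nat (- k))"
  by (simp add: hsym_def hneg_def hexps_def neg_exps_def)

lemma neg_exps_0: "neg_exps 0 m = (if m = 0 then {\<lambda>_. 0} else {})"
  by (auto simp: neg_exps_def)

lemma neg_exps_Suc:
  "neg_exps (Suc n) m = (\<Union>j\<in>{1..m}. (\<lambda>l. l(Suc n := - int j)) ` neg_exps n (m - j))"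
proof (intro set_eqI iffI)
  fix l assume l: "l \<in> neg_exps (Suc n) m"
  define j where "j = nat (- l (Suc n))"
  have "l (Suc n) < 0" "(\<Sum>i=1..n. l i) + l (Suc n) = - int m"
    using l by (simp_all add: neg_exps_def)
  moreover have "(\<Sum>i=1..n. l i) \<le> 0"
    using l by (intro sum_nonpos) (simp add: neg_exps_def less_imp_le)
  ultimately have j: "j \<in> {1..m}" "l (Suc n) = - int j" "(\<Sum>i=1..n. l i) = - int (m - j)"
    unfolding j_def by auto
  have "(\<Sum>i=1..n. (l(Suc n := 0)) i) = (\<Sum>i=1..n. l i)"
    by (intro sum.cong) auto
  then have "l(Suc n := 0) \<in> neg_exps n (m - j)"
    using l j by (auto simp: neg_exps_def)
  moreover have "l = (l(Suc n := 0))(Suc n := - int j)"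
    using j by (simp add: fun_eq_iff)
  ultimately show "l \<in> (\<Union>j\<in>{1..m}. (\<lambda>l. l(Suc n := - int j)) ` neg_exps n (m - j))"
    using j(1) by blast
next
  fix l assume "l \<in> (\<Union>j\<in>{1..m}. (\<lambda>l. l(Suc n := - int j)) ` neg_exps n (m - j))"
  then obtain j l' where j: "j \<in> {1..m}" and l': "l' \<in> neg_exps n (m - j)"
    and l: "l = l'(Suc n := - int j)" by blast
  have "(\<Sum>i=1..n. l i) = (\<Sum>i=1..n. l' i)"
    unfolding l by (intro sum.cong) auto
  then show "l \<in> neg_exps (Suc n) m"
    using j l' unfolding l by (auto simp: neg_exps_def le_Suc_eq of_nat_diff)
qed

lemma finite_neg_exps: "finite (neg_exps n m)"
  by (induction n arbitrary: m) (simp_all add: neg_exps_0 neg_exps_Suc)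

lemma hneg_0: "hneg 0 X m = (if m = 0 then 1 else 0)"
  by (simp add: hneg_def neg_exps_0)

lemma hneg_Suc:
  "hneg (Suc n) X m = (\<Sum>j=1..m. X (Suc n) powi (- int j) * hneg n X (m - j))"
proof -
  let ?ext = "\<lambda>j l. l(Suc n := - int j)"
  have "hneg (Suc n) X m = (\<Sum>j=1..m. \<Sum>l\<in>?ext j ` neg_exps n (m - j). \<Prod>i=1..Suc n. X i powi l i)"
    unfolding hneg_def neg_exps_Suc
    by (rule sum.UNION_disjoint) (auto simp: finite_neg_exps dest: fun_cong[where x = "Suc n"])
  also have "\<dots> = (\<Sum>j=1..m. X (Suc n) powi (- int j) * hneg n X (m - j))"
  proof (intro sum.cong refl)
    fix j
    have zero_outside: "l (Suc n) = 0" if "l \<in> neg_exps n (m - j)" for l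
      using that by (simp add: neg_exps_def)
    then have "inj_on (?ext j) (neg_exps n (m - j))"
      by (intro inj_onI) (metis fun_upd_triv fun_upd_upd)
    moreover have "(\<Prod>i=1..Suc n. X i powi (?ext j l) i) = X (Suc n) powi (- int j) * (\<Prod>i=1..n. X i powi l i)" for l
    proof -
      have "(\<Prod>i=1..n. X i powi (?ext j l) i) = (\<Prod>i=1..n. X i powi l i)"
        by (intro prod.cong) auto
      then show ?thesis
        by (simp add: prod.cl_ivl_Suc)
    qed
    ultimately show "(\<Sum>l\<in>?ext j ` neg_exps n (m - j). \<Prod>i=1..Suc n. X i powi l i)
        = X (Suc n) powi (- int j) * hneg n X (m - j)"
      by (simp add: hneg_def sum.reindex sum_distrib_left mult.commute)
  qed
  finally show ?thesis .
qed

lemma hneg_eq_0: "m < n \<Longrightarrow> hneg n X m = 0"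
  by (induction n arbitrary: m) (auto simp: hneg_Suc intro!: sum.neutral)

unbundle fps_syntax

text \<open>The expansion of t/(c - t) in powers of t.\<close>

definition neg_power_series :: "'a::field \<Rightarrow> 'a fps" where
  "neg_power_series c = Abs_fps (\<lambda>j. if j = 0 then 0 else c powi - int j)"

lemma X_minus_const_mult_neg_power_series:
  assumes "c \<noteq> 0"
  shows "(fps_X - fps_const c) * neg_power_series c = - fps_X"
proof (rule fps_ext)
  fix k
  have "c powi - int (Suc (Suc j)) * c = c powi - int (Suc j)" for j
    using power_int_add_1[of c "- int (Suc (Suc j))"] assms by simp
  then show "((fps_X - fps_const c) * neg_power_series c) $ k = (- fps_X) $ k"
    using assms
    by (cases k; cases "k - 1") (auto simp: algebra_simps fps_X_mult_nth neg_power_series_def power_int_minus)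
qed

lemma fps_nth_prod_neg_power_series:
  "(\<Prod>i=1..n. neg_power_series (X i)) $ m = hneg n X m"
proof (induction n arbitrary: m)
  case 0
  then show ?case
    by (simp add: hneg_0)
next
  case (Suc n)
  have "(\<Prod>i=1..Suc n. neg_power_series (X i)) $ m
      = (\<Sum>j=0..m. neg_power_series (X (Suc n)) $ j * hneg n X (m - j))"
  proof -
    have "(\<Prod>i=1..Suc n. neg_power_series (X i))
        = (\<Prod>i=1..n. neg_power_series (X i)) * neg_power_series (X (Suc n))"
      by (simp add: prod.cl_ivl_Suc)
    also have "\<dots> = neg_power_series (X (Suc n)) * (\<Prod>i=1..n. neg_power_series (X i))"
      by (rule mult.commute)
    finally have "(\<Prod>i=1..Suc n. neg_power_series (X i))
        = neg_power_series (X (Suc n)) * (\<Prod>i=1..n. neg_power_series (X i))" .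
    then show ?thesis
      by (simp only: fps_mult_nth Suc)
  qed
  also have "\<dots> = (\<Sum>j=1..m. X (Suc n) powi (- int j) * hneg n X (m - j))"
    by (simp add: sum.atLeast_Suc_atMost neg_power_series_def)
  finally show ?case
    by (simp add: hneg_Suc)
qed

lemma fps_nth_prod_X_minus_const:
  "(\<Prod>i=1..n. fps_X - fps_const (X i)) $ a = (if a \<le> n then (-1) ^ (n - a) * esym n X (n - a) else 0)"
proof -
  define E where "E k = (\<Prod>i=1..k. fps_X - fps_const (X i))" for k
  have "E n $ a = (if a \<le> n then (-1) ^ (n - a) * esym n X (n - a) else 0)"
  proof (induction n arbitrary: a)
    case 0
    then show ?case
      by (simp add: E_def esym_0)
  next
    case (Suc n)
    have "E (Suc n) = fps_X * E n - fps_const (X (Suc n)) * E n"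
      by (simp add: E_def prod.cl_ivl_Suc algebra_simps)
    then have step: "E (Suc n) $ a = (if a = 0 then 0 else E n $ (a - 1)) - X (Suc n) * E n $ a"
      by (simp add: fps_X_mult_nth)
    consider "a = 0" | b where "a = Suc b" "b < n" | "a = Suc n" | "a > Suc n"
      by (cases a) (auto, linarith)
    then show ?case
    proof cases
      case 1
      then show ?thesis
        using step esym_Suc_Suc[of n X n] esym_eq_0[of n "Suc n" X] by (simp add: Suc.IH)
    next
      case 2
      then have "Suc n - a = Suc (n - a)" "n - b = Suc (n - a)"
        by auto
      with 2 step show ?thesis
        by (simp add: Suc.IH esym_Suc_Suc algebra_simps)
    qed (use step in \<open>simp_all add: Suc.IH esym_0\<close>)
  qed
  then show ?thesis
    by (simp add: E_def)
qed

lemma prod_X_minus_const_mult_prod_neg_power_series: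
  assumes "\<forall>i\<in>{1..n}. X i \<noteq> 0"
  shows "(\<Prod>i=1..n. fps_X - fps_const (X i)) * (\<Prod>i=1..n. neg_power_series (X i)) = (- fps_X) ^ n"
  using assms by (simp flip: prod.distrib add: X_minus_const_mult_neg_power_series)

lemma fps_nth_neg_X_power: "((- fps_X :: 'a::comm_ring_1 fps) ^ n) $ k = (if k = n then (-1) ^ n else 0)"
  by (induction n arbitrary: k) (auto simp: fps_X_mult_nth)

lemma alternating_esym_hneg_convolution:
  assumes "\<forall>i\<in>{1..n}. X i \<noteq> 0"
  shows "(\<Sum>s=0..n. (-1) ^ s * esym n X s * hneg n X (d + s)) = (if d = 0 then (-1) ^ n else 0)"
proof -
  let ?E = "\<Prod>i=1..n. fps_X - fps_const (X i)"
  let ?e = "\<lambda>a. if a \<le> n then (-1) ^ (n - a) * esym n X (n - a) else 0"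
  have "(?E * (\<Prod>i=1..n. neg_power_series (X i))) $ (n + d) = (if d = 0 then (-1) ^ n else 0)"
    by (simp only: prod_X_minus_const_mult_prod_neg_power_series[OF assms] fps_nth_neg_X_power) simp
  then have "(\<Sum>a=0..n+d. ?e a * hneg n X (n + d - a)) = (if d = 0 then (-1) ^ n else 0)"
    by (simp only: fps_mult_nth fps_nth_prod_X_minus_const fps_nth_prod_neg_power_series)
  moreover have "(\<Sum>a=0..n+d. ?e a * hneg n X (n + d - a)) = (\<Sum>a=0..n. ?e a * hneg n X (n + d - a))"
    by (intro sum.mono_neutral_right) auto
  moreover have "\<dots> = (\<Sum>a=0..n. ?e (n - a) * hneg n X (d + a))"
    by (subst sum.atLeastAtMost_rev) (auto intro!: sum.cong)
  ultimately show ?thesis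
    by simp
qed

lemma hneg_esym_hankel_product:
  assumes nz: "\<forall>i\<in>{1..n}. X i \<noteq> 0" and i: "i \<in> {1..n}" and j: "j \<in> {1..n}"
  shows "(\<Sum>k=1..n. hneg n X (i + k - 1) * ((-1) ^ (k + j) * esym n X (k + j - 1)))
         = (if i = j then (-1) ^ (n + 1) else 0)"
proof (cases "i < j")
  case True
  have "hneg n X (i + k - 1) * esym n X (k + j - 1) = 0" if "k \<in> {1..n}" for k
  proof (cases "i + k - 1 < n")
    case False
    then have "n < k + j - 1"
      using True that by auto
    then show ?thesis
      by (simp add: esym_eq_0)
  qed (simp add: hneg_eq_0)
  then show ?thesis
    using True by (simp add: sum.neutral)
next
  case False
  define d where "d = i - j"
  define f where "f s = (-1) ^ (s + 1) * esym n X s * hneg n X (d + s)" for s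
  have "(\<Sum>k=1..n. hneg n X (i + k - 1) * ((-1) ^ (k + j) * esym n X (k + j - 1)))
      = (\<Sum>k=1..n. f (k + (j - 1)))"
  proof (intro sum.cong refl)
    fix k assume "k \<in> {1..n}"
    then have "i + k - 1 = d + (k + (j - 1))" "k + j - 1 = k + (j - 1)" "k + j = k + (j - 1) + 1"
      using False j unfolding d_def by auto
    then show "hneg n X (i + k - 1) * ((-1) ^ (k + j) * esym n X (k + j - 1)) = f (k + (j - 1))"
      unfolding f_def by (simp only:) (simp add: algebra_simps)
  qed
  also have "\<dots> = (\<Sum>s=j..n+(j-1). f s)"
    using sum.shift_bounds_cl_nat_ivl[of f 1 "j - 1" n] j by simp
  also have "\<dots> = (\<Sum>s=0..n. f s)"
  proof -
    have "(\<Sum>s=j..n+(j-1). f s) = (\<Sum>s=j..n. f s)"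
      by (intro sum.mono_neutral_right) (auto simp: f_def esym_eq_0)
    also have "\<dots> = (\<Sum>s=0..n. f s)"
      using False i by (intro sum.mono_neutral_left) (auto simp: f_def d_def hneg_eq_0)
    finally show ?thesis .
  qed
  also have "\<dots> = - (\<Sum>s=0..n. (-1) ^ s * esym n X s * hneg n X (d + s))"
    by (simp add: f_def sum_negf)
  also have "\<dots> = (if i = j then (-1) ^ (n + 1) else 0)"
    using alternating_esym_hneg_convolution[OF nz, of d] False by (simp add: d_def)
  finally show ?thesis .
qed

theorem mainTheorem14:
  fixes n :: nat and X :: "nat \<Rightarrow> 'a::field"
  assumes "n \<ge> 1" and "\<forall>i\<in>{1..n}. X i \<noteq> 0"
  defines "A \<equiv> (\<lambda>i j. hsym n X (1 - int i - int j))"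
      and "B \<equiv> (\<lambda>i j. (-1) ^ (i + j) * esym n X (i + j - 1))"
  shows "(\<forall>i\<in>{1..n}. \<forall>j\<in>{1..n}. (\<Sum>k=1..n. A i k * B k j) = (if i = j then 1 else 0))
       \<and> (\<forall>i\<in>{1..n}. \<forall>j\<in>{1..n}. (\<Sum>k=1..n. B i k * A k j) = (if i = j then 1 else 0))"
proof -
  have A_hneg: "A i k = (-1) ^ (n + 1) * hneg n X (i + k - 1)" if "i \<ge> 1" "k \<ge> 1" for i k
  proof -
    have "nat (- (1 - int i - int k)) = i + k - 1"
      using that by simp
    then show ?thesis
      using that by (simp add: A_def hsym_neg)
  qed
  have AB: "(\<Sum>k=1..n. A i k * B k j) = (if i = j then 1 else 0)"
    if "i \<in> {1..n}" "j \<in> {1..n}" for i j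
  proof -
    have "(\<Sum>k=1..n. A i k * B k j)
        = (-1) ^ (n + 1) * (\<Sum>k=1..n. hneg n X (i + k - 1) * ((-1) ^ (k + j) * esym n X (k + j - 1)))"
      using that by (simp add: A_hneg B_def sum_distrib_left mult.assoc)
    then show ?thesis
      using hneg_esym_hankel_product[OF assms(2) that] by (simp flip: power_add)
  qed
  have "A i k = A k i" "B i k = B k i" for i k
    by (simp_all add: A_def B_def add.commute diff_diff_eq)
  then have "(\<Sum>k=1..n. B i k * A k j) = (\<Sum>k=1..n. A j k * B k i)" for i j
    by (simp add: mult.commute)
  then show ?thesis
    using AB by auto
qed

end
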